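(* Let $X=\{i,j,k\}$ and let $\langle Q,\nu\rangle$ be an MSC on $X$ in which every off-diagonal transition probability $q_{ab}(M)$ ($M\subseteq X$ a menu, $a\ne b\in M$) is strictly positive except $q_{ik}(\{i,k\})=q_{ik}(X)=0$. Write $\rho(M)=\rho(\nu_M,Q(M))$. Then (a) $\dfrac{\rho_i(X)}{\rho_j(X)}>\dfrac{\rho_i(\{i,j\})}{\rho_j(\{i,j\})}$; (b) $\rho_i(X)>\rho_i(\{i,j\})$ if and only if $q_{ki}(X)>q_{ji}(X)$.
   Context: A menu is a nonempty subset of $X$. An MSC (Markov stochastic choice model) $\langle Q,\nu\rangle$ consists of, for every menu $M$, a matrix $Q(M)=(q_{ab}(M))_{a,b\in M}$ with nonnegative entries and a probability distribution $\nu_M$ on $M$, such that for all menus $M$ and distinct $a,b\in M$: (A1) $q_{aa}(M)=1-\sum_{c\neq a}q_{ac}(M)>0$; (A2) if $q_{ab}(\{a,b\})=0$ then $q_{ba}(\{a,b\})>0$; (A3) $q_{ab}(\{a,b\})\,q_{ba}(M)=q_{ba}(\{a,b\})\,q_{ab}(M)$. For a right stochastic matrix $Q$ on $M$ and a distribution $\nu$ on $M$ define $\rho(\nu,Q)=\lim_{\alpha\to0^+}\sum_{t\ge0}\alpha(1-\alpha)^t\nu Q^t$ (the limit exists and satisfies $\rho(\nu,Q)(I-Q)=0$; for irreducible $Q$ it is the unique stationary distribution). *)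

theory Defs
  imports "HOL-Analysis.Analysis"
begin

definition menu :: "'a set \<Rightarrow> 'a set \<Rightarrow> bool" where
  "menu X M \<longleftrightarrow> M \<subseteq> X \<and> M \<noteq> {}"

text \<open>Matrices on a menu M are functions 'a => 'a => real, only entries indexed
  by elements of M matter. t-th matrix power on M.\<close>
fun matpow :: "'a set \<Rightarrow> ('a \<Rightarrow> 'a \<Rightarrow> real) \<Rightarrow> nat \<Rightarrow> 'a \<Rightarrow> 'a \<Rightarrow> real" where
  "matpow M Q 0 a b = (if a = b then 1 else 0)"
| "matpow M Q (Suc t) a b = (\<Sum>c\<in>M. matpow M Q t a c * Q c b)"

definition vecmatpow :: "'a set \<Rightarrow> ('a \<Rightarrow> real) \<Rightarrow> ('a \<Rightarrow> 'a \<Rightarrow> real) \<Rightarrow> nat \<Rightarrow> 'a \<Rightarrow> real" where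
  "vecmatpow M \<nu> Q t b = (\<Sum>a\<in>M. \<nu> a * matpow M Q t a b)"

definition rho :: "'a set \<Rightarrow> ('a \<Rightarrow> real) \<Rightarrow> ('a \<Rightarrow> 'a \<Rightarrow> real) \<Rightarrow> 'a \<Rightarrow> real" where
  "rho M \<nu> Q b = Lim (at_right 0)
     (\<lambda>\<alpha>::real. \<Sum>t. \<alpha> * (1 - \<alpha>) ^ t * vecmatpow M \<nu> Q t b)"

definition MSC :: "'a set \<Rightarrow> ('a set \<Rightarrow> 'a \<Rightarrow> 'a \<Rightarrow> real) \<Rightarrow> ('a set \<Rightarrow> 'a \<Rightarrow> real) \<Rightarrow> bool" where
  "MSC X Q \<nu> \<longleftrightarrow> (\<forall>M. menu X M \<longrightarrow>
      (\<forall>a\<in>M. \<forall>b\<in>M. Q M a b \<ge> 0) \<and>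
      (\<forall>a\<in>M. \<nu> M a \<ge> 0) \<and> (\<Sum>a\<in>M. \<nu> M a) = 1 \<and>
      (\<forall>a\<in>M. Q M a a = 1 - (\<Sum>c\<in>M - {a}. Q M a c) \<and> Q M a a > 0) \<and>
      (\<forall>a\<in>M. \<forall>b\<in>M. a \<noteq> b \<longrightarrow>
          (Q {a,b} a b = 0 \<longrightarrow> Q {a,b} b a > 0) \<and>
          Q {a,b} a b * Q M b a = Q {a,b} b a * Q M a b))"

end

theory Submission imports Defs begin

(* The Abel means R_\<alpha> = \<Sum>_t \<alpha>(1-\<alpha>)^t \<nu>Q^t are probability vectors satisfying
   R_\<alpha> = \<alpha>\<nu> + (1-\<alpha>) R_\<alpha> Q, so their stationarity defect R_\<alpha> - R_\<alpha> Q is O(\<alpha>).  Hence any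
   coordinate that the equations y = yQ, \<Sum>y = 1 determine linearly is also the value of \<rho> there.
   On {i,j} this gives \<rho>_i = q_ji/(q_ij+q_ji).  On X, where i cannot move to k,
     \<rho>_i(X)/\<rho>_j(X) = q_ji/q_ij + q_ki q_jk/(q_ij (q_kj+q_ki)),
   and by (A3) q_ji/q_ij is also the odds ratio on {i,j}; the extra term, due to the detour
   j \<rightarrow> k \<rightarrow> i, gives (a).  Comparing \<rho>_i(X) with q_ji/(q_ij+q_ji) reduces to q_ki > q_ji,
   which is (b). *)

definition abel_mean :: "'a set \<Rightarrow> ('a \<Rightarrow> real) \<Rightarrow> ('a \<Rightarrow> 'a \<Rightarrow> real) \<Rightarrow> real \<Rightarrow> 'a \<Rightarrow> real" where
  "abel_mean M \<nu> Q \<alpha> b = (\<Sum>t. \<alpha> * (1 - \<alpha>) ^ t * vecmatpow M \<nu> Q t b)"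

lemma rho_abel_mean: "rho M \<nu> Q b = Lim (at_right 0) (\<lambda>\<alpha>. abel_mean M \<nu> Q \<alpha> b)"
  unfolding rho_def abel_mean_def ..

lemma vecmatpow_0: "finite M \<Longrightarrow> b \<in> M \<Longrightarrow> vecmatpow M \<nu> Q 0 b = \<nu> b"
  unfolding vecmatpow_def by (simp add: if_distrib cong: if_cong)

lemma vecmatpow_Suc: "vecmatpow M \<nu> Q (Suc t) b = (\<Sum>c\<in>M. vecmatpow M \<nu> Q t c * Q c b)"
proof -
  have "vecmatpow M \<nu> Q (Suc t) b = (\<Sum>a\<in>M. \<Sum>c\<in>M. \<nu> a * matpow M Q t a c * Q c b)"
    unfolding vecmatpow_def by (simp add: sum_distrib_left mult.assoc)
  also have "\<dots> = (\<Sum>c\<in>M. \<Sum>a\<in>M. \<nu> a * matpow M Q t a c * Q c b)"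
    by (rule sum.swap)
  also have "\<dots> = (\<Sum>c\<in>M. vecmatpow M \<nu> Q t c * Q c b)"
    unfolding vecmatpow_def by (simp add: sum_distrib_right)
  finally show ?thesis .
qed

lemma eventually_unit_interval: "eventually (\<lambda>\<alpha>::real. 0 < \<alpha> \<and> \<alpha> < 1) (at_right 0)"
  by (auto simp: eventually_at_right_field intro!: exI[of _ 1])

locale finite_markov_chain =
  fixes M :: "'a set" and Q :: "'a \<Rightarrow> 'a \<Rightarrow> real" and \<nu> :: "'a \<Rightarrow> real"
  assumes finite_states: "finite M"
    and transition_nonneg: "a \<in> M \<Longrightarrow> b \<in> M \<Longrightarrow> Q a b \<ge> 0"
    and row_sum: "a \<in> M \<Longrightarrow> (\<Sum>b\<in>M. Q a b) = 1"
    and initial_nonneg: "a \<in> M \<Longrightarrow> \<nu> a \<ge> 0"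
    and initial_sum: "(\<Sum>a\<in>M. \<nu> a) = 1"
begin

lemma sum_right_mult_stochastic: "(\<Sum>b\<in>M. \<Sum>c\<in>M. y c * Q c b) = (\<Sum>c\<in>M. y c)"
proof -
  have "(\<Sum>b\<in>M. \<Sum>c\<in>M. y c * Q c b) = (\<Sum>c\<in>M. y c * (\<Sum>b\<in>M. Q c b))"
    by (subst sum.swap) (simp add: sum_distrib_left)
  also have "\<dots> = (\<Sum>c\<in>M. y c)"
    by (simp add: row_sum)
  finally show ?thesis .
qed

lemma vecmatpow_distribution:
  shows "b \<in> M \<Longrightarrow> vecmatpow M \<nu> Q t b \<ge> 0" and "(\<Sum>b\<in>M. vecmatpow M \<nu> Q t b) = 1"
proof (induction t arbitrary: b)
  case 0
  { case 1 then show ?case by (simp add: vecmatpow_0 finite_states initial_nonneg) }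
  { case 2 then show ?case by (simp add: vecmatpow_0 finite_states initial_sum) }
next
  case (Suc t)
  { case 1 then show ?case
      by (simp add: vecmatpow_Suc Suc.IH transition_nonneg sum_nonneg) }
  { case 2 then show ?case
      by (simp add: vecmatpow_Suc sum_right_mult_stochastic Suc.IH) }
qed

lemma vecmatpow_le_1: "b \<in> M \<Longrightarrow> vecmatpow M \<nu> Q t b \<le> 1"
  using member_le_sum[of b M "vecmatpow M \<nu> Q t"] vecmatpow_distribution finite_states
  by fastforce

context
  fixes \<alpha> :: real
  assumes \<alpha>: "0 < \<alpha>" "\<alpha> < 1"
begin

lemma summable_abel_terms: "b \<in> M \<Longrightarrow> summable (\<lambda>t. \<alpha> * (1 - \<alpha>) ^ t * vecmatpow M \<nu> Q t b)"
proof (rule summable_comparison_test'[where N = 0])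
  show "summable (\<lambda>t. \<alpha> * (1 - \<alpha>) ^ t)"
    using \<alpha> by (intro summable_mult summable_geometric) auto
  show "norm (\<alpha> * (1 - \<alpha>) ^ t * vecmatpow M \<nu> Q t b) \<le> \<alpha> * (1 - \<alpha>) ^ t" if "b \<in> M" for t
    using \<alpha> vecmatpow_distribution(1)[OF that] vecmatpow_le_1[OF that]
    by (auto simp: abs_mult intro!: mult_left_le)
qed

lemma abel_mean_nonneg: "b \<in> M \<Longrightarrow> abel_mean M \<nu> Q \<alpha> b \<ge> 0"
  unfolding abel_mean_def using \<alpha>
  by (intro suminf_nonneg summable_abel_terms mult_nonneg_nonneg vecmatpow_distribution) auto

lemma abel_mean_resolvent:
  assumes b: "b \<in> M"
  shows "abel_mean M \<nu> Q \<alpha> b = \<alpha> * \<nu> b + (1 - \<alpha>) * (\<Sum>c\<in>M. abel_mean M \<nu> Q \<alpha> c * Q c b)"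
proof -
  let ?f = "\<lambda>c t. \<alpha> * (1 - \<alpha>) ^ t * vecmatpow M \<nu> Q t c"
  have head: "?f b 0 = \<alpha> * \<nu> b"
    using b by (simp add: vecmatpow_0 finite_states)
  have "(\<Sum>t. ?f b (Suc t)) = (\<Sum>t. \<Sum>c\<in>M. (1 - \<alpha>) * Q c b * ?f c t)"
    by (simp add: vecmatpow_Suc sum_distrib_left mult_ac)
  also have "\<dots> = (\<Sum>c\<in>M. \<Sum>t. (1 - \<alpha>) * Q c b * ?f c t)"
    by (intro suminf_sum summable_mult summable_abel_terms)
  also have "\<dots> = (\<Sum>c\<in>M. (1 - \<alpha>) * Q c b * abel_mean M \<nu> Q \<alpha> c)"
    unfolding abel_mean_def by (intro sum.cong refl suminf_mult summable_abel_terms)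
  also have "\<dots> = (1 - \<alpha>) * (\<Sum>c\<in>M. abel_mean M \<nu> Q \<alpha> c * Q c b)"
    by (simp add: sum_distrib_left mult_ac)
  finally have tail: "(\<Sum>t. ?f b (Suc t)) = (1 - \<alpha>) * (\<Sum>c\<in>M. abel_mean M \<nu> Q \<alpha> c * Q c b)" .
  have "(\<Sum>t. ?f b (Suc t)) = abel_mean M \<nu> Q \<alpha> b - ?f b 0"
    unfolding abel_mean_def by (rule suminf_split_head[OF summable_abel_terms[OF b]])
  then show ?thesis
    using head tail by linarith
qed

lemma abel_mean_sum: "(\<Sum>b\<in>M. abel_mean M \<nu> Q \<alpha> b) = 1"
proof -
  let ?S = "\<Sum>b\<in>M. abel_mean M \<nu> Q \<alpha> b"
  have "?S = (\<Sum>b\<in>M. \<alpha> * \<nu> b + (1 - \<alpha>) * (\<Sum>c\<in>M. abel_mean M \<nu> Q \<alpha> c * Q c b))"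
    by (intro sum.cong refl abel_mean_resolvent)
  also have "\<dots> = \<alpha> * (\<Sum>b\<in>M. \<nu> b) + (1 - \<alpha>) * (\<Sum>b\<in>M. \<Sum>c\<in>M. abel_mean M \<nu> Q \<alpha> c * Q c b)"
    by (simp add: sum.distrib sum_distrib_left)
  also have "\<dots> = \<alpha> + (1 - \<alpha>) * ?S"
    by (simp add: initial_sum sum_right_mult_stochastic)
  finally have "?S = \<alpha> + (1 - \<alpha>) * ?S" .
  then show ?thesis using \<alpha> by (simp add: algebra_simps)
qed

end

lemma abel_mean_defect_tendsto_0:
  assumes b: "b \<in> M"
  shows "((\<lambda>\<alpha>. abel_mean M \<nu> Q \<alpha> b - (\<Sum>c\<in>M. abel_mean M \<nu> Q \<alpha> c * Q c b)) \<longlongrightarrow> 0)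
           (at_right 0)"
proof (rule Lim_null_comparison)
  show "((\<lambda>\<alpha>::real. \<alpha>) \<longlongrightarrow> 0) (at_right 0)"
    by (rule tendsto_ident_at)
  show "\<forall>\<^sub>F \<alpha> in at_right 0.
          norm (abel_mean M \<nu> Q \<alpha> b - (\<Sum>c\<in>M. abel_mean M \<nu> Q \<alpha> c * Q c b)) \<le> \<alpha>"
    using eventually_unit_interval
  proof eventually_elim
    case (elim \<alpha>)
    then have \<alpha>: "0 < \<alpha>" "\<alpha> < 1" by auto
    let ?S = "\<Sum>c\<in>M. abel_mean M \<nu> Q \<alpha> c * Q c b"
    have "?S \<ge> 0"
      using b by (auto intro!: sum_nonneg mult_nonneg_nonneg abel_mean_nonneg[OF \<alpha>] transition_nonneg)
    moreover have "?S \<le> (\<Sum>c\<in>M. abel_mean M \<nu> Q \<alpha> c)"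
    proof (intro sum_mono mult_left_le)
      fix c assume c: "c \<in> M"
      show "Q c b \<le> 1"
        using b c member_le_sum[of b M "Q c"] finite_states row_sum transition_nonneg by auto
    qed (rule abel_mean_nonneg[OF \<alpha>])
    moreover have "\<nu> b \<le> 1"
      using b member_le_sum[of b M \<nu>] finite_states initial_nonneg initial_sum by auto
    ultimately have "\<bar>\<nu> b - ?S\<bar> \<le> 1"
      unfolding abs_le_iff using abel_mean_sum[OF \<alpha>] initial_nonneg[OF b] by linarith
    have "abel_mean M \<nu> Q \<alpha> b - ?S = \<alpha> * (\<nu> b - ?S)"
      using abel_mean_resolvent[OF \<alpha> b] by (simp add: algebra_simps)
    then have "norm (abel_mean M \<nu> Q \<alpha> b - ?S) = \<alpha> * \<bar>\<nu> b - ?S\<bar>"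
      using \<alpha> by (simp add: abs_mult)
    also have "\<dots> \<le> \<alpha>"
      using \<open>\<bar>\<nu> b - ?S\<bar> \<le> 1\<close> \<alpha> by (simp add: mult_left_le)
    finally show ?case .
  qed
qed

lemma rho_eqI:
  assumes b: "b \<in> M" and N: "N \<noteq> 0"
    and solve: "\<And>y. (\<Sum>c\<in>M. y c) = 1 \<Longrightarrow>
                  N * y b = p + (\<Sum>c\<in>M. L c * (y c - (\<Sum>d\<in>M. y d * Q d c)))"
  shows "rho M \<nu> Q b = p / N"
proof -
  let ?defect = "\<lambda>\<alpha> c. abel_mean M \<nu> Q \<alpha> c - (\<Sum>d\<in>M. abel_mean M \<nu> Q \<alpha> d * Q d c)"
  have "((\<lambda>\<alpha>. (p + (\<Sum>c\<in>M. L c * ?defect \<alpha> c)) / N) \<longlongrightarrow> (p + (\<Sum>c\<in>M. L c * 0)) / N)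
          (at_right 0)"
    by (intro tendsto_divide tendsto_add tendsto_const tendsto_sum tendsto_mult_left N)
      (rule abel_mean_defect_tendsto_0)
  then have "((\<lambda>\<alpha>. (p + (\<Sum>c\<in>M. L c * ?defect \<alpha> c)) / N) \<longlongrightarrow> p / N) (at_right 0)"
    by (simp only: mult_zero_right sum.neutral_const add_0_right)
  moreover have "\<forall>\<^sub>F \<alpha> in at_right 0. (p + (\<Sum>c\<in>M. L c * ?defect \<alpha> c)) / N = abel_mean M \<nu> Q \<alpha> b"
    using eventually_unit_interval
  proof eventually_elim
    case (elim \<alpha>)
    then have "N * abel_mean M \<nu> Q \<alpha> b = p + (\<Sum>c\<in>M. L c * ?defect \<alpha> c)"
      using abel_mean_sum by (intro solve[of "abel_mean M \<nu> Q \<alpha>"]) auto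
    then show ?case
      using N by (simp add: divide_eq_eq mult.commute)
  qed
  ultimately have "((\<lambda>\<alpha>. abel_mean M \<nu> Q \<alpha> b) \<longlongrightarrow> p / N) (at_right 0)"
    by (rule Lim_transform_eventually)
  then show ?thesis
    unfolding rho_abel_mean by (rule tendsto_Lim[OF trivial_limit_at_right_real])
qed

lemma rho_two_states:
  assumes M: "M = {i, j}" and ij: "i \<noteq> j" and pos: "Q i j + Q j i > 0"
  shows "rho M \<nu> Q i = Q j i / (Q i j + Q j i)"
proof (rule rho_eqI[where L = "\<lambda>x. if x = i then 1 else 0"])
  show "i \<in> M" "Q i j + Q j i \<noteq> 0" using M pos by auto
  fix y :: "'a \<Rightarrow> real" assume "(\<Sum>c\<in>M. y c) = 1"
  then have "y i + y j = 1" using M ij by simp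
  moreover have "Q i i = 1 - Q i j"
    using row_sum[of i] M ij by simp
  ultimately have "(Q i j + Q j i) * y i = Q j i + (y i - (y i * Q i i + y j * Q j i))"
    by algebra
  then show "(Q i j + Q j i) * y i =
      Q j i + (\<Sum>x\<in>M. (if x = i then 1 else 0) * (y x - (\<Sum>d\<in>M. y d * Q d x)))"
    using M ij by simp
qed

lemma rho_three_states:
  assumes M: "M = {i, j, k}" and distinct: "i \<noteq> j" "j \<noteq> k" "i \<noteq> k"
    and no_ik: "Q i k = 0" and pos_ij: "Q i j > 0" and pos_k: "Q k j + Q k i > 0"
  defines "N \<equiv> Q i j * (Q k j + Q k i) + Q i j * Q j k + Q j i * (Q k j + Q k i) + Q k i * Q j k"
  shows "rho M \<nu> Q i = (Q j i * (Q k j + Q k i) + Q k i * Q j k) / N"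
    and "rho M \<nu> Q j = Q i j * (Q k j + Q k i) / N"
proof -
  define a b c e D where "a = Q i j" and "b = Q j i" and "c = Q j k" and "e = Q k i"
    and "D = Q k j + Q k i"
  define w where "w y x = y x - (\<Sum>d\<in>M. y d * Q d x)" for y :: "'a \<Rightarrow> real" and x
  have "Q i j * (Q k j + Q k i) > 0"
    using pos_ij pos_k by simp
  then have "N > 0"
    using M transition_nonneg[of j i] transition_nonneg[of j k] transition_nonneg[of k i]
      transition_nonneg[of k j] less_imp_le[OF pos_ij] unfolding N_def
    by (intro add_pos_nonneg) (auto intro: mult_nonneg_nonneg)
  have Qii: "Q i i = 1 - a" and Qkk: "Q k k = 1 - D"
    using row_sum[of i] row_sum[of k] M distinct no_ik unfolding a_def D_def by auto
  have ident: "N * y i = (b * D + e * c) + (D + c) * w y i + (e - b) * w y k"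
              "N * y j = a * D + (- D) * w y i + (- (a + e)) * w y k"
    if "(\<Sum>c\<in>M. y c) = 1" for y
  proof -
    have sum1: "y i + y j + y k = 1"
      using that M distinct by simp
    have "w y i = y i * a - y j * b - y k * e"
      using M distinct by (simp add: w_def Qii b_def e_def algebra_simps)
    moreover have "w y k = y k * D - y j * c"
      using M distinct by (simp add: w_def Qkk c_def no_ik algebra_simps)
    ultimately show "N * y i = (b * D + e * c) + (D + c) * w y i + (e - b) * w y k"
                    "N * y j = a * D + (- D) * w y i + (- (a + e)) * w y k"
      using sum1 unfolding N_def a_def b_def c_def e_def D_def by algebra+
  qed
  show "rho M \<nu> Q i = (Q j i * (Q k j + Q k i) + Q k i * Q j k) / N"
  proof (rule rho_eqI[where L = "\<lambda>x. if x = i then D + c else if x = k then e - b else 0"])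
    fix y :: "'a \<Rightarrow> real" assume "(\<Sum>c\<in>M. y c) = 1"
    note ident = ident[OF this]
    have "(\<Sum>x\<in>M. (if x = i then D + c else if x = k then e - b else 0) * w y x)
        = (D + c) * w y i + (e - b) * w y k"
      using M distinct by simp
    moreover have "Q j i * (Q k j + Q k i) + Q k i * Q j k = b * D + e * c"
      by (simp add: b_def c_def e_def D_def)
    ultimately show "N * y i = Q j i * (Q k j + Q k i) + Q k i * Q j k +
        (\<Sum>x\<in>M. (if x = i then D + c else if x = k then e - b else 0) *
                 (y x - (\<Sum>d\<in>M. y d * Q d x)))"
      using ident(1) unfolding w_def[symmetric] by linarith
  qed (use M \<open>N > 0\<close> in simp_all)
  show "rho M \<nu> Q j = Q i j * (Q k j + Q k i) / N"
  proof (rule rho_eqI[where L = "\<lambda>x. if x = i then - D else if x = k then - (a + e) else 0"])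
    fix y :: "'a \<Rightarrow> real" assume "(\<Sum>c\<in>M. y c) = 1"
    note ident = ident[OF this]
    have "(\<Sum>x\<in>M. (if x = i then - D else if x = k then - (a + e) else 0) * w y x)
        = (- D) * w y i + (- (a + e)) * w y k"
      using M distinct by simp
    moreover have "Q i j * (Q k j + Q k i) = a * D"
      by (simp add: a_def D_def)
    ultimately show "N * y j = Q i j * (Q k j + Q k i) +
        (\<Sum>x\<in>M. (if x = i then - D else if x = k then - (a + e) else 0) *
                 (y x - (\<Sum>d\<in>M. y d * Q d x)))"
      using ident(2) unfolding w_def[symmetric] by linarith
  qed (use M \<open>N > 0\<close> in simp_all)
qed

end

lemma MSC_finite_markov_chain:
  assumes msc: "MSC X Q \<nu>" and M: "menu X M" "finite M"
  shows "finite_markov_chain M (Q M) (\<nu> M)"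
proof
  have props: "(\<forall>a\<in>M. \<forall>b\<in>M. Q M a b \<ge> 0) \<and> (\<forall>a\<in>M. \<nu> M a \<ge> 0) \<and> (\<Sum>a\<in>M. \<nu> M a) = 1 \<and>
      (\<forall>a\<in>M. Q M a a = 1 - (\<Sum>c\<in>M - {a}. Q M a c) \<and> Q M a a > 0)"
    using msc[unfolded MSC_def, rule_format, OF M(1)] by (elim conjE) (intro conjI)
  then show "finite M" "\<And>a b. a \<in> M \<Longrightarrow> b \<in> M \<Longrightarrow> Q M a b \<ge> 0"
    "\<And>a. a \<in> M \<Longrightarrow> \<nu> M a \<ge> 0" "(\<Sum>a\<in>M. \<nu> M a) = 1"
    using M(2) by auto
  show "(\<Sum>b\<in>M. Q M a b) = 1" if "a \<in> M" for a
    using props that sum.remove[OF M(2) that, of "Q M a"] by simp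
qed

lemma MSC_reversibility:
  assumes msc: "MSC X Q \<nu>" and M: "menu X M" and ab: "a \<in> M" "b \<in> M" "a \<noteq> b"
  shows "Q {a, b} a b * Q M b a = Q {a, b} b a * Q M a b"
proof -
  have "\<forall>a\<in>M. \<forall>b\<in>M. a \<noteq> b \<longrightarrow>
          (Q {a, b} a b = 0 \<longrightarrow> Q {a, b} b a > 0) \<and> Q {a, b} a b * Q M b a = Q {a, b} b a * Q M a b"
    using msc[unfolded MSC_def, rule_format, OF M] by (elim conjE)
  then show ?thesis
    using ab by blast
qed

lemma binary_odds_lt_ternary_odds:
  fixes a b c d e a' b' :: real
  assumes "a > 0" "b > 0" "c > 0" "d > 0" "e > 0" "a' > 0" "b' > 0"
    and reversible: "a' * b = b' * a"
  defines "N \<equiv> a * d + a * c + b * d + e * c"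
  shows "(b' / (a' + b')) / (a' / (a' + b')) < ((b * d + e * c) / N) / (a * d / N)"
proof -
  have "N \<noteq> 0"
    unfolding N_def using assms(1-5) by (intro less_imp_neq[symmetric] add_pos_pos mult_pos_pos)
  have "(b' / (a' + b')) / (a' / (a' + b')) = b' / a'"
    using assms by simp
  also have "\<dots> = b / a"
    using assms by (simp add: frac_eq_eq mult.commute)
  also have "\<dots> < (b * d + e * c) / (a * d)"
    using assms by (simp add: field_simps)
  also have "\<dots> = ((b * d + e * c) / N) / (a * d / N)"
    using \<open>N \<noteq> 0\<close> by simp
  finally show ?thesis .
qed

lemma binary_share_lt_ternary_share_iff:
  fixes a b c d e a' b' :: real
  assumes "a > 0" "b > 0" "c > 0" "d > 0" "e \<ge> 0" "a' > 0" "b' > 0"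
    and reversible: "a' * b = b' * a"
  shows "b' / (a' + b') < (b * d + e * c) / (a * d + a * c + b * d + e * c) \<longleftrightarrow> b < e"
proof -
  define N where "N = a * d + a * c + b * d + e * c"
  have "N > 0"
    using assms unfolding N_def by (simp add: add_pos_nonneg)
  have "b' / (a' + b') = b / (a + b)"
    using assms by (simp add: field_simps)
  then have "b' / (a' + b') < (b * d + e * c) / N \<longleftrightarrow> b / (a + b) < (b * d + e * c) / N"
    by simp
  also have "\<dots> \<longleftrightarrow> b * N < (b * d + e * c) * (a + b)"
    using assms \<open>N > 0\<close> by (simp add: field_simps)
  also have "\<dots> \<longleftrightarrow> a * c * b < a * c * e"
    unfolding N_def by (simp add: algebra_simps)
  also have "\<dots> \<longleftrightarrow> b < e"
    using assms by simp
  finally show ?thesis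
    unfolding N_def .
qed

theorem mainTheorem13:
  fixes i j k :: 'a
    and Q :: "'a set \<Rightarrow> 'a \<Rightarrow> 'a \<Rightarrow> real"
    and \<nu> :: "'a set \<Rightarrow> 'a \<Rightarrow> real"
  defines "X \<equiv> {i, j, k}"
  assumes distinct: "i \<noteq> j" "j \<noteq> k" "i \<noteq> k"
    and msc: "MSC X Q \<nu>"
    and pos: "\<And>M a b. menu X M \<Longrightarrow> a \<in> M \<Longrightarrow> b \<in> M \<Longrightarrow> a \<noteq> b \<Longrightarrow>
               \<not> (a = i \<and> b = k \<and> (M = {i, k} \<or> M = X)) \<Longrightarrow> Q M a b > 0"
    and zero1: "Q {i, k} i k = 0"
    and zero2: "Q X i k = 0"
  shows "rho X (\<nu> X) (Q X) i / rho X (\<nu> X) (Q X) j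
           > rho {i, j} (\<nu> {i, j}) (Q {i, j}) i / rho {i, j} (\<nu> {i, j}) (Q {i, j}) j
       \<and> (rho X (\<nu> X) (Q X) i > rho {i, j} (\<nu> {i, j}) (Q {i, j}) i
           \<longleftrightarrow> Q X k i > Q X j i)"
proof -
  have menus: "menu X X" "menu X {i, j}"
    unfolding menu_def X_def by auto
  interpret ternary: finite_markov_chain X "Q X" "\<nu> X"
    using MSC_finite_markov_chain[OF msc menus(1)] X_def by simp
  interpret binary: finite_markov_chain "{i, j}" "Q {i, j}" "\<nu> {i, j}"
    using MSC_finite_markov_chain[OF msc menus(2)] by simp
  have positive: "Q X i j > 0" "Q X j i > 0" "Q X j k > 0" "Q X k j + Q X k i > 0" "Q X k i > 0"
      "Q {i, j} i j > 0" "Q {i, j} j i > 0"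
    using pos[OF menus(1)] pos[OF menus(2)] distinct unfolding X_def by (auto intro: add_pos_pos)
  have reversible: "Q {i, j} i j * Q X j i = Q {i, j} j i * Q X i j"
    using MSC_reversibility[OF msc menus(1), of i j] distinct unfolding X_def by simp
  note rho_ternary =
    ternary.rho_three_states[OF X_def[THEN meta_eq_to_obj_eq] distinct zero2 positive(1,4)]
  have rho_binary:
    "rho {i, j} (\<nu> {i, j}) (Q {i, j}) i = Q {i, j} j i / (Q {i, j} i j + Q {i, j} j i)"
    "rho {i, j} (\<nu> {i, j}) (Q {i, j}) j = Q {i, j} i j / (Q {i, j} i j + Q {i, j} j i)"
    using binary.rho_two_states[OF refl distinct(1)]
      binary.rho_two_states[OF insert_commute distinct(1)[symmetric]] positive(6,7)
    by (simp_all add: add.commute)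
  show ?thesis
    unfolding rho_ternary rho_binary
    using binary_odds_lt_ternary_odds[OF positive(1-5,6,7) reversible]
      binary_share_lt_ternary_share_iff[OF positive(1-4) less_imp_le[OF positive(5)] positive(6,7)
        reversible]
    by blast
qed

end
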